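(* Let $\mu\in V_n$ be an associative algebra such that there exists $[\lambda]\in\mathrm{GL}(n).[\mu]$ with $\mathrm M_\lambda$ negative definite. Then $\mu$ is semisimple.
   Context: $V_n$ is the space of bilinear maps $\mu:\mathbb C^n\times\mathbb C^n\to\mathbb C^n$ with $\mathrm{GL}(n)$-action $g.\mu(X,Y)=g\mu(g^{-1}X,g^{-1}Y)$ and the standard Hermitian inner product on $\mathbb C^n$. $L^\lambda_XY=\lambda(X,Y)$, $R^\lambda_XY=\lambda(Y,X)$, and for an orthonormal basis $\{X_i\}$, $\mathrm M_\lambda=2\sum_i L^\lambda_{X_i}(L^\lambda_{X_i})^*-2\sum_i (L^\lambda_{X_i})^*L^\lambda_{X_i}-2\sum_i (R^\lambda_{X_i})^*R^\lambda_{X_i}$. An associative algebra is semisimple if its radical (largest nilpotent ideal) is zero. *)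

theory Defs
  imports "HOL-Analysis.Analysis"
begin

type_synonym 'n bilin = "complex^'n \<Rightarrow> complex^'n \<Rightarrow> complex^'n"

definition clinear_vec :: "(complex^'n \<Rightarrow> complex^'m) \<Rightarrow> bool" where
  "clinear_vec f \<longleftrightarrow> (\<forall>x y. f (x + y) = f x + f y) \<and> (\<forall>c x. f (c *s x) = c *s f x)"

definition bilin_map :: "'n::finite bilin \<Rightarrow> bool" where
  "bilin_map \<mu> \<longleftrightarrow> (\<forall>x. clinear_vec (\<mu> x)) \<and> (\<forall>y. clinear_vec (\<lambda>x. \<mu> x y))"

definition assoc_alg :: "'n::finite bilin \<Rightarrow> bool" where
  "assoc_alg \<mu> \<longleftrightarrow> (\<forall>x y z. \<mu> (\<mu> x y) z = \<mu> x (\<mu> y z))"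

definition gl_act :: "complex^'n^'n \<Rightarrow> 'n::finite bilin \<Rightarrow> 'n bilin" where
  "gl_act g \<mu> = (\<lambda>X Y. g *v \<mu> (matrix_inv g *v X) (matrix_inv g *v Y))"

text \<open>[lambda] in GL(n).[mu] (orbit in projective space).\<close>
definition in_proj_orbit :: "'n::finite bilin \<Rightarrow> 'n bilin \<Rightarrow> bool" where
  "in_proj_orbit lam \<mu> \<longleftrightarrow> lam \<noteq> (\<lambda>X Y. 0) \<and>
     (\<exists>g c. invertible g \<and> c \<noteq> 0 \<and> lam = (\<lambda>X Y. c *s gl_act g \<mu> X Y))"

text \<open>Matrices (w.r.t. the standard basis) of L_X Y = lambda(X,Y), R_X Y = lambda(Y,X).\<close>
definition Lmat :: "'n::finite bilin \<Rightarrow> complex^'n \<Rightarrow> complex^'n^'n" where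
  "Lmat lam X = (\<chi> k j. (lam X (axis j 1)) $ k)"

definition Rmat :: "'n::finite bilin \<Rightarrow> complex^'n \<Rightarrow> complex^'n^'n" where
  "Rmat lam X = (\<chi> k j. (lam (axis j 1) X) $ k)"

definition adj :: "complex^'n^'m \<Rightarrow> complex^'m^'n" where
  "adj A = (\<chi> i j. cnj (A $ j $ i))"

definition Mmat :: "'n::finite bilin \<Rightarrow> complex^'n^'n" where
  "Mmat lam = (\<Sum>i\<in>UNIV. 2 *\<^sub>R (Lmat lam (axis i 1) ** adj (Lmat lam (axis i 1)))
                     - 2 *\<^sub>R (adj (Lmat lam (axis i 1)) ** Lmat lam (axis i 1))
                     - 2 *\<^sub>R (adj (Rmat lam (axis i 1)) ** Rmat lam (axis i 1)))"

definition herm_form :: "complex^'n^'n \<Rightarrow> complex^'n \<Rightarrow> complex" where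
  "herm_form A x = (\<Sum>i\<in>UNIV. \<Sum>j\<in>UNIV. cnj (x $ i) * A $ i $ j * x $ j)"

definition neg_definite :: "complex^'n^'n \<Rightarrow> bool" where
  "neg_definite A \<longleftrightarrow> adj A = A \<and> (\<forall>x. x \<noteq> 0 \<longrightarrow> Re (herm_form A x) < 0)"

definition is_ideal :: "'n::finite bilin \<Rightarrow> (complex^'n) set \<Rightarrow> bool" where
  "is_ideal \<mu> I \<longleftrightarrow> 0 \<in> I \<and> (\<forall>x\<in>I. \<forall>y\<in>I. x + y \<in> I) \<and> (\<forall>c. \<forall>x\<in>I. c *s x \<in> I)
     \<and> (\<forall>a. \<forall>x\<in>I. \<mu> a x \<in> I \<and> \<mu> x a \<in> I)"

fun mprod :: "'n::finite bilin \<Rightarrow> (complex^'n) list \<Rightarrow> complex^'n" where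
  "mprod \<mu> [] = 0"
| "mprod \<mu> [x] = x"
| "mprod \<mu> (x # y # xs) = \<mu> x (mprod \<mu> (y # xs))"

definition nilpotent_ideal :: "'n::finite bilin \<Rightarrow> (complex^'n) set \<Rightarrow> bool" where
  "nilpotent_ideal \<mu> I \<longleftrightarrow> is_ideal \<mu> I \<and>
     (\<exists>k\<ge>1. \<forall>xs. length xs = k \<and> set xs \<subseteq> I \<longrightarrow> mprod \<mu> xs = 0)"

text \<open>Radical = largest nilpotent ideal; it is zero iff every nilpotent ideal is zero.\<close>
definition semisimple :: "'n::finite bilin \<Rightarrow> bool" where
  "semisimple \<mu> \<longleftrightarrow> (\<forall>I. nilpotent_ideal \<mu> I \<longrightarrow> I = {0})"

end

theory Submission
  imports Defs
begin

text \<open>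
  Regard C^n as the real Euclidean space R^2n. For every real orthonormal basis B,
    Re <M_lam x, x> = \<Sum>{b,c \<in> B} <lam(b,c), x>^2 - \<Sum>{b \<in> B} |lam(b,x)|^2 - \<Sum>{b \<in> B} |lam(x,b)|^2,
  and by Parseval's identity the right-hand side does not depend on B.
  If mu is not semisimple, a nonzero nilpotent ideal I contains the nonzero ideal
  T = {x \<in> I. xI = Ix = 0} (a longest nonvanishing product lies in it), and T^2 = 0.
  Its image J = gT is a square-zero ideal of lam. Take B = B1 \<union> B2 with B1 an orthonormal
  basis of J and B2 one of the orthogonal complement, and sum the form over x \<in> B1: since
  J absorbs products and JJ = 0, everything cancels except \<Sum>{b,c \<in> B2} |proj_J lam(b,c)|^2 \<ge> 0,
  whereas negative definiteness of M_lam makes the sum negative.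
\<close>

lemma clinear_vec_zero: "clinear_vec f \<Longrightarrow> f 0 = 0"
  unfolding clinear_vec_def by (metis add_cancel_right_right)

lemma clinear_vec_sum:
  assumes "clinear_vec f"
  shows "f (sum g S) = (\<Sum>i\<in>S. f (g i))"
proof (cases "finite S")
  case True then show ?thesis
    by (induction S rule: finite_induct) (use assms in \<open>auto simp: clinear_vec_zero clinear_vec_def\<close>)
next
  case False then show ?thesis using clinear_vec_zero[OF assms] by simp
qed

lemma clinear_vec_basis_expansion:
  assumes "clinear_vec f"
  shows "f x = (\<Sum>j\<in>UNIV. x $ j *s f (axis j 1))"
proof -
  have "f x = f (\<Sum>j\<in>UNIV. x $ j *s axis j 1)" by (simp add: basis_expansion)
  also have "\<dots> = (\<Sum>j\<in>UNIV. x $ j *s f (axis j 1))"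
    using assms by (simp add: clinear_vec_sum clinear_vec_def)
  finally show ?thesis .
qed

lemma scaleR_eq_of_real_vector_mult: "r *\<^sub>R (v::complex^'n) = complex_of_real r *s v"
proof -
  have "r *\<^sub>R (z::complex) = of_real r * z" for z by (simp add: scaleR_conv_of_real)
  then show ?thesis by (simp add: vec_eq_iff)
qed

lemma clinear_vec_imp_linear: "clinear_vec f \<Longrightarrow> linear f"
  by (rule linearI) (auto simp: clinear_vec_def scaleR_eq_of_real_vector_mult)

lemma bilin_map_clinear_vec:
  assumes "bilin_map \<mu>"
  shows "clinear_vec (\<mu> x)" "clinear_vec (\<lambda>y. \<mu> y x)"
  using assms unfolding bilin_map_def by blast+

lemma bilin_map_add:
  assumes "bilin_map \<mu>"
  shows "\<mu> (x + x') y = \<mu> x y + \<mu> x' y" "\<mu> y (x + x') = \<mu> y x + \<mu> y x'"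
  using bilin_map_clinear_vec[OF assms] unfolding clinear_vec_def by auto

lemma bilin_map_scale:
  assumes "bilin_map \<mu>"
  shows "\<mu> (c *s x) y = c *s \<mu> x y" "\<mu> y (c *s x) = c *s \<mu> y x"
  using bilin_map_clinear_vec[OF assms] unfolding clinear_vec_def by auto

lemma bilin_map_zero:
  assumes "bilin_map \<mu>"
  shows "\<mu> 0 y = 0" "\<mu> y 0 = 0"
  using clinear_vec_zero bilin_map_clinear_vec[OF assms] by auto

lemma is_ideal_imp_subspace: "is_ideal \<mu> I \<Longrightarrow> subspace I"
  unfolding is_ideal_def subspace_def by (simp add: scaleR_eq_of_real_vector_mult)

section \<open>The Hermitian form of \<open>M\<^sub>\<lambda>\<close>\<close>

lemma herm_form_add: "herm_form (A + B) x = herm_form A x + herm_form B x"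
  unfolding herm_form_def by (simp add: distrib_left distrib_right sum.distrib)

lemma herm_form_diff: "herm_form (A - B) x = herm_form A x - herm_form B x"
  unfolding herm_form_def by (simp add: left_diff_distrib right_diff_distrib sum_subtractf)

lemma herm_form_scaleR: "herm_form (r *\<^sub>R A) x = of_real r * herm_form A x"
proof -
  have "r *\<^sub>R (z::complex) = of_real r * z" for z by (simp add: scaleR_conv_of_real)
  then have "(r *\<^sub>R A)$i$j = of_real r * A$i$j" for i j by simp
  then show ?thesis unfolding herm_form_def by (simp add: sum_distrib_left mult_ac)
qed

lemma herm_form_sum: "herm_form (\<Sum>i\<in>S. A i) x = (\<Sum>i\<in>S. herm_form (A i) x)"
proof (cases "finite S")
  case True then show ?thesis
    by (induction S rule: finite_induct) (simp_all add: herm_form_add herm_form_def[of 0])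
qed (simp add: herm_form_def)

lemma herm_form_mult_adj:
  "herm_form (A ** adj A) x = (\<Sum>k\<in>UNIV. of_real ((cmod (\<Sum>j\<in>UNIV. cnj (A$j$k) * x$j))\<^sup>2))"
proof -
  define u where "u k = (\<Sum>j\<in>UNIV. cnj (A$j$k) * x$j)" for k
  have cnj_u: "cnj (u k) = (\<Sum>i\<in>UNIV. A$i$k * cnj (x$i))" for k
    unfolding u_def by simp
  have "herm_form (A ** adj A) x
      = (\<Sum>i\<in>UNIV. \<Sum>j\<in>UNIV. cnj (x$i) * (\<Sum>k\<in>UNIV. A$i$k * cnj (A$j$k)) * x$j)"
    unfolding herm_form_def by (simp add: matrix_matrix_mult_def adj_def)
  also have "\<dots> = (\<Sum>i\<in>UNIV. \<Sum>j\<in>UNIV. \<Sum>k\<in>UNIV. (A$i$k * cnj (x$i)) * (cnj (A$j$k) * x$j))"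
    by (simp add: sum_distrib_left sum_distrib_right mult_ac)
  also have "\<dots> = (\<Sum>k\<in>UNIV. \<Sum>i\<in>UNIV. \<Sum>j\<in>UNIV. (A$i$k * cnj (x$i)) * (cnj (A$j$k) * x$j))"
    by (subst sum.swap, rule sum.cong[OF refl], rule sum.swap)
  also have "\<dots> = (\<Sum>k\<in>UNIV. cnj (u k) * u k)"
    unfolding cnj_u u_def by (simp add: sum_product)
  also have "\<dots> = (\<Sum>k\<in>UNIV. of_real ((cmod (u k))\<^sup>2))"
    by (rule sum.cong[OF refl]) (metis complex_norm_square mult.commute)
  finally show ?thesis unfolding u_def .
qed

lemma herm_form_adj_mult:
  "herm_form (adj A ** A) x = (\<Sum>k\<in>UNIV. of_real ((cmod ((A *v x)$k))\<^sup>2))"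
proof -
  have "herm_form (adj A ** A) x = herm_form (adj A ** adj (adj A)) x"
    by (simp add: adj_def vec_eq_iff)
  also have "\<dots> = (\<Sum>k\<in>UNIV. of_real ((cmod (\<Sum>j\<in>UNIV. A$k$j * x$j))\<^sup>2))"
    unfolding herm_form_mult_adj by (simp add: adj_def)
  finally show ?thesis by (simp add: matrix_vector_mult_def)
qed

lemma norm_power2_vec: "(norm (w::complex^'n))\<^sup>2 = (\<Sum>k\<in>UNIV. (cmod (w$k))\<^sup>2)"
  by (simp add: norm_vec_def L2_set_def sum_nonneg)

lemma cmod_sum_cnj_mult_power2:
  "(cmod (\<Sum>j\<in>UNIV. cnj (v$j) * x$j))\<^sup>2 = (v \<bullet> x)\<^sup>2 + ((\<i> *s v) \<bullet> x)\<^sup>2"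
proof -
  have "Re (\<Sum>j\<in>UNIV. cnj (v$j) * x$j) = v \<bullet> x"
    by (simp add: inner_vec_def inner_complex_def)
  moreover have "Im (\<Sum>j\<in>UNIV. cnj (v$j) * x$j) = (\<i> *s v) \<bullet> x"
    by (simp add: inner_vec_def inner_complex_def sum_subtractf algebra_simps)
  ultimately show ?thesis by (simp add: cmod_power2)
qed

lemma Lmat_mult_vec: "clinear_vec (lam X) \<Longrightarrow> Lmat lam X *v x = lam X x"
  by (simp add: clinear_vec_basis_expansion[of "lam X" x] vec_eq_iff matrix_vector_mult_def
      Lmat_def mult.commute)

lemma Rmat_mult_vec: "clinear_vec (\<lambda>y. lam y X) \<Longrightarrow> Rmat lam X *v x = lam x X"
  by (simp add: clinear_vec_basis_expansion[of "\<lambda>y. lam y X" x] vec_eq_iff matrix_vector_mult_def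
      Rmat_def mult.commute)

lemma sum_Basis_complex_vec:
  fixes g :: "complex^'n \<Rightarrow> real"
  shows "(\<Sum>b\<in>Basis. g b) = (\<Sum>j\<in>UNIV. g (axis j 1) + g (\<i> *s axis j 1))"
proof -
  have Basis_eq: "(Basis :: (complex^'n) set) = (\<Union>j\<in>UNIV. {axis j 1, axis j \<i>})"
    by (auto simp: Basis_vec_def Basis_complex_def)
  have axis_ii: "axis j \<i> = \<i> *s axis j 1" for j :: 'n
    by (simp add: vec_eq_iff axis_def)
  have "(\<Sum>b\<in>Basis. g b) = (\<Sum>j\<in>UNIV. sum g {axis j 1, axis j \<i>})"
    unfolding Basis_eq by (rule sum.UNION_disjoint) (auto simp: axis_eq_axis)
  also have "\<dots> = (\<Sum>j\<in>UNIV. g (axis j 1) + g (\<i> *s axis j 1))"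
    by (rule sum.cong) (simp_all add: axis_eq_axis flip: axis_ii)
  finally show ?thesis .
qed

definition coeff_energy :: "(complex^'n) set \<Rightarrow> 'n::finite bilin \<Rightarrow> complex^'n \<Rightarrow> real" where
  "coeff_energy B lam x = (\<Sum>b\<in>B. \<Sum>c\<in>B. (lam b c \<bullet> x)\<^sup>2)"

definition left_energy :: "(complex^'n) set \<Rightarrow> 'n::finite bilin \<Rightarrow> complex^'n \<Rightarrow> real" where
  "left_energy B lam x = (\<Sum>b\<in>B. (norm (lam b x))\<^sup>2)"

definition right_energy :: "(complex^'n) set \<Rightarrow> 'n::finite bilin \<Rightarrow> complex^'n \<Rightarrow> real" where
  "right_energy B lam x = (\<Sum>b\<in>B. (norm (lam x b))\<^sup>2)"

text \<open>The complex basis vector e_j yields the two real basis vectors e_j and i e_j, which contribute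
  equally to each sum; this accounts for the factors 2 in M.\<close>
lemma Re_herm_form_Mmat:
  assumes bl: "bilin_map lam"
  shows "Re (herm_form (Mmat lam) x)
           = coeff_energy Basis lam x - left_energy Basis lam x - right_energy Basis lam x"
proof -
  define Q where "Q i = (\<Sum>k\<in>UNIV. (lam (axis i 1) (axis k 1) \<bullet> x)\<^sup>2
                                   + ((\<i> *s lam (axis i 1) (axis k 1)) \<bullet> x)\<^sup>2)" for i
  note lin = bilin_map_clinear_vec[OF bl]
  have "Re (herm_form (Lmat lam (axis i 1) ** adj (Lmat lam (axis i 1))) x) = Q i" for i
    unfolding herm_form_mult_adj Re_sum Q_def by (simp add: Lmat_def cmod_sum_cnj_mult_power2)
  moreover have "Re (herm_form (adj (Lmat lam (axis i 1)) ** Lmat lam (axis i 1)) x)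
                   = (norm (lam (axis i 1) x))\<^sup>2" for i
    unfolding herm_form_adj_mult Re_sum Lmat_mult_vec[OF lin(1)] norm_power2_vec by simp
  moreover have "Re (herm_form (adj (Rmat lam (axis i 1)) ** Rmat lam (axis i 1)) x)
                   = (norm (lam x (axis i 1)))\<^sup>2" for i
    unfolding herm_form_adj_mult Re_sum Rmat_mult_vec[OF lin(2)] norm_power2_vec by simp
  ultimately have M: "Re (herm_form (Mmat lam) x) = (\<Sum>i\<in>UNIV. 2 * Q i
                        - 2 * (norm (lam (axis i 1) x))\<^sup>2 - 2 * (norm (lam x (axis i 1)))\<^sup>2)"
    unfolding Mmat_def herm_form_sum Re_sum herm_form_diff herm_form_scaleR by simp
  have norm_ii: "norm (\<i> *s v) = norm v" for v :: "complex^'n"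
    by (simp add: norm_vec_def norm_mult)
  have "coeff_energy Basis lam x = (\<Sum>i\<in>UNIV. 2 * Q i)"
    unfolding coeff_energy_def sum_Basis_complex_vec Q_def
    by (simp add: bilin_map_scale[OF bl] add.commute sum.distrib)
  moreover have "left_energy Basis lam x = (\<Sum>i\<in>UNIV. 2 * (norm (lam (axis i 1) x))\<^sup>2)"
    unfolding left_energy_def sum_Basis_complex_vec by (simp add: bilin_map_scale[OF bl] norm_ii)
  moreover have "right_energy Basis lam x = (\<Sum>i\<in>UNIV. 2 * (norm (lam x (axis i 1)))\<^sup>2)"
    unfolding right_energy_def sum_Basis_complex_vec by (simp add: bilin_map_scale[OF bl] norm_ii)
  ultimately show ?thesis unfolding M by (simp add: sum_subtractf)
qed

section \<open>Parseval frames\<close>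

definition parseval :: "'a::euclidean_space set \<Rightarrow> bool" where
  "parseval B \<longleftrightarrow> finite B \<and> (\<forall>v. (\<Sum>b\<in>B. (v \<bullet> b)\<^sup>2) = v \<bullet> v)"

lemma parseval_Basis: "parseval (Basis::'a::euclidean_space set)"
  unfolding parseval_def power2_eq_square by (simp add: euclidean_inner[symmetric])

lemma parseval_sum_norm_adjoint:
  fixes T :: "'a::euclidean_space \<Rightarrow> 'b::euclidean_space"
  assumes lT: "linear T" and pB: "parseval B"
  shows "(\<Sum>b\<in>B. (norm (T b))\<^sup>2) = (\<Sum>w\<in>Basis. (norm (adjoint T w))\<^sup>2)"
proof -
  have "(\<Sum>b\<in>B. (norm (T b))\<^sup>2) = (\<Sum>b\<in>B. \<Sum>w\<in>Basis. (T b \<bullet> w)\<^sup>2)"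
    using parseval_Basis[where 'a='b] by (simp add: parseval_def power2_norm_eq_inner)
  also have "\<dots> = (\<Sum>w\<in>Basis. \<Sum>b\<in>B. (adjoint T w \<bullet> b)\<^sup>2)"
    by (subst sum.swap) (simp add: adjoint_works[OF lT] inner_commute)
  also have "\<dots> = (\<Sum>w\<in>Basis. (norm (adjoint T w))\<^sup>2)"
    using pB by (simp add: parseval_def power2_norm_eq_inner)
  finally show ?thesis .
qed

lemma parseval_sum_norm_eq:
  fixes T :: "'a::euclidean_space \<Rightarrow> 'b::euclidean_space"
  assumes "linear T" "parseval B" "parseval C"
  shows "(\<Sum>b\<in>B. (norm (T b))\<^sup>2) = (\<Sum>c\<in>C. (norm (T c))\<^sup>2)"
  using parseval_sum_norm_adjoint[OF assms(1,2)] parseval_sum_norm_adjoint[OF assms(1,3)] by simp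

lemma orthonormal_sum_inner_power2:
  fixes B :: "'a::euclidean_space set"
  assumes "finite B" "pairwise orthogonal B" "\<And>b. b \<in> B \<Longrightarrow> norm b = 1" "v \<in> span B"
  shows "(\<Sum>b\<in>B. (v \<bullet> b)\<^sup>2) = v \<bullet> v"
proof -
  have "v \<bullet> v = v \<bullet> (\<Sum>b\<in>B. (v \<bullet> b) *\<^sub>R b)"
    using orthonormal_basis_expand[OF assms(2,3,4,1)] by simp
  also have "\<dots> = (\<Sum>b\<in>B. (v \<bullet> b)\<^sup>2)"
    by (simp add: inner_sum_right power2_eq_square)
  finally show ?thesis by simp
qed

lemma parseval_adapted_to_subspace:
  fixes J :: "'a::euclidean_space set"
  assumes J: "subspace J"
  obtains B1 B2 where "finite B1" "finite B2" "B1 \<subseteq> J" "span B1 = J" "B1 \<inter> B2 = {}"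
    "\<And>b. b \<in> B1 \<Longrightarrow> norm b = 1" "\<And>v. v \<in> J \<Longrightarrow> (\<Sum>b\<in>B1. (v \<bullet> b)\<^sup>2) = v \<bullet> v"
    "parseval (B1 \<union> B2)"
proof -
  define K where "K = {y. \<forall>x\<in>J. orthogonal x y}"
  have K: "subspace K" unfolding K_def by (rule subspace_orthogonal_to_vectors)
  obtain B1 where B1: "B1 \<subseteq> J" "pairwise orthogonal B1" "\<And>b. b \<in> B1 \<Longrightarrow> norm b = 1"
    "independent B1" "span B1 = J"
    using orthonormal_basis_subspace[OF J] by metis
  obtain B2 where B2: "B2 \<subseteq> K" "pairwise orthogonal B2" "\<And>b. b \<in> B2 \<Longrightarrow> norm b = 1"
    "independent B2" "span B2 = K"
    using orthonormal_basis_subspace[OF K] by metis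
  have fin: "finite B1" "finite B2" using B1(4) B2(4) independent_imp_finite by blast+
  have disj: "B1 \<inter> B2 = {}"
  proof -
    have "b \<bullet> b = 0" if "b \<in> B1" "b \<in> B2" for b
      using that B1(1) B2(1) unfolding K_def orthogonal_def by blast
    then show ?thesis using B1(3) by (force simp: norm_eq_sqrt_inner)
  qed
  have P1: "(\<Sum>b\<in>B1. (v \<bullet> b)\<^sup>2) = v \<bullet> v" if "v \<in> J" for v
    using orthonormal_sum_inner_power2[OF fin(1) B1(2,3)] that B1(5) by blast
  have P2: "(\<Sum>b\<in>B2. (v \<bullet> b)\<^sup>2) = v \<bullet> v" if "v \<in> K" for v
    using orthonormal_sum_inner_power2[OF fin(2) B2(2,3)] that B2(5) by blast
  have "(\<Sum>b\<in>B1 \<union> B2. (v \<bullet> b)\<^sup>2) = v \<bullet> v" for v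
  proof -
    obtain y z where yz: "y \<in> span J" "\<And>w. w \<in> span J \<Longrightarrow> orthogonal z w" "v = y + z"
      using orthogonal_subspace_decomp_exists[of J v] by blast
    have y: "y \<in> J" using yz(1) J by (metis span_eq_iff)
    have z: "z \<in> K" unfolding K_def using yz(2) span_base orthogonal_commute by blast
    have y_z: "\<And>b. b \<in> B2 \<Longrightarrow> y \<bullet> b = 0" "\<And>b. b \<in> B1 \<Longrightarrow> z \<bullet> b = 0"
      using y z B1(1) B2(1) unfolding K_def orthogonal_def by (auto simp: inner_commute)
    have "(\<Sum>b\<in>B1. (v \<bullet> b)\<^sup>2) = y \<bullet> y"
      using P1[OF y] y_z yz(3) by (simp add: inner_add_left)
    moreover have "(\<Sum>b\<in>B2. (v \<bullet> b)\<^sup>2) = z \<bullet> z"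
      using P2[OF z] y_z yz(3) by (simp add: inner_add_left)
    moreover have "v \<bullet> v = y \<bullet> y + z \<bullet> z"
      using yz(3) y z unfolding K_def orthogonal_def
      by (auto simp: inner_add_left inner_add_right inner_commute[of z y])
    ultimately show ?thesis using disj fin by (simp add: sum.union_disjoint)
  qed
  then have "parseval (B1 \<union> B2)" using fin by (simp add: parseval_def)
  then show ?thesis using that fin B1 disj P1 by blast
qed

lemma linear_inner_left_compose: "linear f \<Longrightarrow> linear (\<lambda>b. f b \<bullet> x)"
  using linear_compose[OF _ bounded_linear.linear[OF bounded_linear_inner_left]]
  by (simp add: o_def)

lemma energies_parseval_invariant:
  assumes bl: "bilin_map lam" and pB: "parseval B"
  shows "coeff_energy Basis lam x = coeff_energy B lam x"
    and "left_energy Basis lam x = left_energy B lam x"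
    and "right_energy Basis lam x = right_energy B lam x"
proof -
  note lin = bilin_map_clinear_vec[OF bl, THEN clinear_vec_imp_linear]
  note invariant = parseval_sum_norm_eq[OF _ parseval_Basis pB]
  have "coeff_energy Basis lam x = (\<Sum>b\<in>Basis. \<Sum>c\<in>B. (lam b c \<bullet> x)\<^sup>2)"
    unfolding coeff_energy_def using invariant[OF linear_inner_left_compose[OF lin(1)]] by simp
  also have "\<dots> = (\<Sum>c\<in>B. \<Sum>b\<in>B. (lam b c \<bullet> x)\<^sup>2)"
    by (subst sum.swap) (use invariant[OF linear_inner_left_compose[OF lin(2)]] in simp)
  also have "\<dots> = coeff_energy B lam x" unfolding coeff_energy_def by (rule sum.swap)
  finally show "coeff_energy Basis lam x = coeff_energy B lam x" .
  show "left_energy Basis lam x = left_energy B lam x"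
    unfolding left_energy_def by (rule invariant[OF lin(2)])
  show "right_energy Basis lam x = right_energy B lam x"
    unfolding right_energy_def by (rule invariant[OF lin(1)])
qed

section \<open>Square-zero ideals and negative definiteness\<close>

text \<open>Only a real subspace is required: this is all the argument with real orthonormal bases uses.\<close>
definition square_zero_ideal :: "'n::finite bilin \<Rightarrow> (complex^'n) set \<Rightarrow> bool" where
  "square_zero_ideal lam J \<longleftrightarrow> subspace J \<and> (\<forall>a. \<forall>x\<in>J. lam a x \<in> J \<and> lam x a \<in> J)
     \<and> (\<forall>x\<in>J. \<forall>y\<in>J. lam x y = 0)"

lemma sum_Re_herm_form_Mmat_square_zero_nonneg:
  assumes bl: "bilin_map lam" and J: "square_zero_ideal lam J"
    and fin: "finite B1" "finite B2" and disj: "B1 \<inter> B2 = {}" and B1J: "B1 \<subseteq> J"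
    and P1: "\<And>v. v \<in> J \<Longrightarrow> (\<Sum>b\<in>B1. (v \<bullet> b)\<^sup>2) = v \<bullet> v"
    and pB: "parseval (B1 \<union> B2)"
  shows "0 \<le> (\<Sum>x\<in>B1. Re (herm_form (Mmat lam) x))"
proof -
  define B where "B = B1 \<union> B2"
  define N where "N v = (\<Sum>x\<in>B1. (v \<bullet> x)\<^sup>2)" for v
  have N_J: "N v = (norm v)\<^sup>2" if "v \<in> J" for v
    unfolding N_def using P1[OF that] by (simp add: power2_norm_eq_inner)
  have in_J: "lam b c \<in> J" if "b \<in> B1 \<or> c \<in> B1" for b c
    using that B1J J unfolding square_zero_ideal_def by blast
  have zero: "lam b c = 0" if "b \<in> B1" "c \<in> B1" for b c
    using that B1J J unfolding square_zero_ideal_def by blast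
  have split: "(\<Sum>b\<in>B. g b) = (\<Sum>b\<in>B1. g b) + (\<Sum>b\<in>B2. (g b :: real))" for g
    unfolding B_def by (rule sum.union_disjoint[OF fin disj])
  define T12 where "T12 = (\<Sum>b\<in>B1. \<Sum>c\<in>B2. (norm (lam b c))\<^sup>2)"
  define T21 where "T21 = (\<Sum>b\<in>B2. \<Sum>c\<in>B1. (norm (lam b c))\<^sup>2)"
  define T22 where "T22 = (\<Sum>b\<in>B2. \<Sum>c\<in>B2. N (lam b c))"
  have "(\<Sum>x\<in>B1. coeff_energy B lam x) = (\<Sum>b\<in>B. \<Sum>c\<in>B. N (lam b c))"
    unfolding coeff_energy_def N_def
    by (subst sum.swap) (simp add: sum.swap[where A=B1])
  also have "\<dots> = T12 + T21 + T22"
    unfolding split sum.distrib T12_def T21_def T22_def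
    using zero in_J N_J by (simp add: N_def)
  finally have coeff: "(\<Sum>x\<in>B1. coeff_energy B lam x) = T12 + T21 + T22" .
  have left: "(\<Sum>x\<in>B1. left_energy B lam x) = T21"
    unfolding left_energy_def split T21_def using zero by (simp add: sum.swap[where A=B1])
  have right: "(\<Sum>x\<in>B1. right_energy B lam x) = T12"
    unfolding right_energy_def split T12_def using zero by simp
  have "(\<Sum>x\<in>B1. Re (herm_form (Mmat lam) x)) = T22"
    unfolding Re_herm_form_Mmat[OF bl] energies_parseval_invariant[OF bl pB, folded B_def]
      sum_subtractf coeff left right by simp
  moreover have "T22 \<ge> 0" unfolding T22_def N_def by (simp add: sum_nonneg)
  ultimately show ?thesis by simp
qed

lemma neg_definite_Mmat_square_zero_ideal:
  assumes bl: "bilin_map lam" and nd: "neg_definite (Mmat lam)" and J: "square_zero_ideal lam J"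
  shows "J = {0}"
proof (rule ccontr)
  assume nontrivial: "J \<noteq> {0}"
  obtain B1 B2 where fin: "finite B1" "finite B2" and B1J: "B1 \<subseteq> J" and span: "span B1 = J"
    and disj: "B1 \<inter> B2 = {}" and unit: "\<And>b. b \<in> B1 \<Longrightarrow> norm b = 1"
    and P1: "\<And>v. v \<in> J \<Longrightarrow> (\<Sum>b\<in>B1. (v \<bullet> b)\<^sup>2) = v \<bullet> v" and pB: "parseval (B1 \<union> B2)"
    using J parseval_adapted_to_subspace unfolding square_zero_ideal_def by metis
  have "B1 \<noteq> {}" using span nontrivial by auto
  moreover have "Re (herm_form (Mmat lam) x) < 0" if "x \<in> B1" for x
  proof -
    have "x \<noteq> 0" using unit[OF that] by auto
    then show ?thesis using nd unfolding neg_definite_def by blast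
  qed
  ultimately have "(\<Sum>x\<in>B1. Re (herm_form (Mmat lam) x)) < (\<Sum>x\<in>B1. 0)"
    using fin(1) by (intro sum_strict_mono) auto
  with sum_Re_herm_form_Mmat_square_zero_nonneg[OF bl J fin disj B1J P1 pB] show False by simp
qed

section \<open>Nilpotent ideals\<close>

lemma mprod_Cons: "xs \<noteq> [] \<Longrightarrow> mprod \<mu> (y # xs) = \<mu> y (mprod \<mu> xs)"
  by (cases xs) auto

lemma mprod_snoc:
  assumes "assoc_alg \<mu>" and "xs \<noteq> []"
  shows "mprod \<mu> (xs @ [y]) = \<mu> (mprod \<mu> xs) y"
  using assms(2)
proof (induction xs)
  case (Cons a xs)
  show ?case
  proof (cases "xs = []")
    case False
    then have "mprod \<mu> ((a # xs) @ [y]) = \<mu> a (\<mu> (mprod \<mu> xs) y)"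
      using Cons.IH by (simp add: mprod_Cons)
    also have "\<dots> = \<mu> (mprod \<mu> (a # xs)) y"
      using assms(1) False by (simp add: assoc_alg_def mprod_Cons)
    finally show ?thesis .
  qed simp
qed simp

lemma mprod_in_ideal:
  assumes "is_ideal \<mu> I" and "xs \<noteq> []" and "set xs \<subseteq> I"
  shows "mprod \<mu> xs \<in> I"
  using assms(2,3)
proof (induction xs)
  case (Cons a xs)
  then show ?case
    using assms(1) by (cases "xs = []") (auto simp: is_ideal_def mprod_Cons)
qed simp

text \<open>A longest nonvanishing product of elements of \<open>I\<close> is annihilated by \<open>I\<close> on both sides.\<close>
lemma nilpotent_ideal_annihilated_element:
  assumes as: "assoc_alg \<mu>" and nil: "nilpotent_ideal \<mu> I" and nontrivial: "I \<noteq> {0}"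
  shows "\<exists>p\<in>I. p \<noteq> 0 \<and> (\<forall>y\<in>I. \<mu> y p = 0 \<and> \<mu> p y = 0)"
proof -
  have I: "is_ideal \<mu> I" using nil unfolding nilpotent_ideal_def by blast
  define kills where "kills k \<longleftrightarrow> 1 \<le> k \<and> (\<forall>xs. length xs = k \<and> set xs \<subseteq> I \<longrightarrow> mprod \<mu> xs = 0)"
    for k
  define k0 where "k0 = (LEAST k. kills k)"
  have "\<exists>k. kills k" using nil unfolding nilpotent_ideal_def kills_def by blast
  then have kills_k0: "kills k0" unfolding k0_def by (rule LeastI_ex)
  obtain x0 where "x0 \<in> I" "x0 \<noteq> 0" using nontrivial I unfolding is_ideal_def by blast
  then have "\<not> kills 1" unfolding kills_def by (auto intro!: exI[of _ "[x0]"])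
  then have k0: "k0 \<ge> 2" using kills_k0 unfolding kills_def by (cases "k0 = 1") simp_all
  have "\<not> kills (k0 - 1)" unfolding k0_def by (rule not_less_Least) (use k0 k0_def in simp)
  then obtain xs where xs: "length xs = k0 - 1" "set xs \<subseteq> I" "mprod \<mu> xs \<noteq> 0"
    unfolding kills_def using k0 by auto
  have "xs \<noteq> []" using xs(1) k0 by auto
  have vanish: "mprod \<mu> ys = 0" if "length ys = k0" "set ys \<subseteq> I" for ys
    using kills_k0 that unfolding kills_def by blast
  have "\<mu> y (mprod \<mu> xs) = 0" if "y \<in> I" for y
    using vanish[of "y # xs"] xs that k0 \<open>xs \<noteq> []\<close> by (simp add: mprod_Cons)
  moreover have "\<mu> (mprod \<mu> xs) y = 0" if "y \<in> I" for y
    using vanish[of "xs @ [y]"] xs that k0 \<open>xs \<noteq> []\<close> by (simp add: mprod_snoc[OF as])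
  ultimately show ?thesis using mprod_in_ideal[OF I \<open>xs \<noteq> []\<close> xs(2)] xs(3) by blast
qed

lemma is_ideal_two_sided_annihilator:
  assumes bl: "bilin_map \<mu>" and as: "assoc_alg \<mu>" and I: "is_ideal \<mu> I"
  shows "is_ideal \<mu> {x\<in>I. \<forall>y\<in>I. \<mu> x y = 0 \<and> \<mu> y x = 0}" (is "is_ideal \<mu> ?T")
  unfolding is_ideal_def
proof (intro conjI ballI allI)
  show "0 \<in> ?T" using I by (simp add: is_ideal_def bilin_map_zero[OF bl])
  show "x + y \<in> ?T" if "x \<in> ?T" "y \<in> ?T" for x y
    using I that by (simp add: is_ideal_def bilin_map_add[OF bl])
  show "c *s x \<in> ?T" if "x \<in> ?T" for c x
    using I that by (simp add: is_ideal_def bilin_map_scale[OF bl])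
  fix a x assume x: "x \<in> ?T"
  have assoc: "\<mu> (\<mu> u v) w = \<mu> u (\<mu> v w)" for u v w using as unfolding assoc_alg_def by blast
  have "\<mu> a x \<in> I" "\<mu> x a \<in> I" using I x unfolding is_ideal_def by blast+
  moreover have "\<mu> (\<mu> a x) y = 0" "\<mu> (\<mu> x a) y = 0" if "y \<in> I" for y
  proof -
    have "\<mu> a y \<in> I" using I that unfolding is_ideal_def by blast
    then show "\<mu> (\<mu> a x) y = 0" "\<mu> (\<mu> x a) y = 0"
      using x that by (simp_all add: assoc bilin_map_zero[OF bl])
  qed
  moreover have "\<mu> y (\<mu> a x) = 0" "\<mu> y (\<mu> x a) = 0" if "y \<in> I" for y
  proof -
    have "\<mu> y a \<in> I" using I that unfolding is_ideal_def by blast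
    then show "\<mu> y (\<mu> a x) = 0" "\<mu> y (\<mu> x a) = 0"
      using x that by (simp_all add: bilin_map_zero[OF bl] flip: assoc)
  qed
  ultimately show "\<mu> a x \<in> ?T" "\<mu> x a \<in> ?T" by auto
qed

lemma nilpotent_ideal_contains_square_zero_ideal:
  assumes bl: "bilin_map \<mu>" and as: "assoc_alg \<mu>"
    and nil: "nilpotent_ideal \<mu> I" and nontrivial: "I \<noteq> {0}"
  obtains T where "square_zero_ideal \<mu> T" "T \<noteq> {0}"
proof -
  define T where "T = {x\<in>I. \<forall>y\<in>I. \<mu> x y = 0 \<and> \<mu> y x = 0}"
  have I: "is_ideal \<mu> I" using nil unfolding nilpotent_ideal_def by blast
  have T: "is_ideal \<mu> T" unfolding T_def by (rule is_ideal_two_sided_annihilator[OF bl as I])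
  have square_zero: "square_zero_ideal \<mu> T"
    unfolding square_zero_ideal_def
  proof (intro conjI)
    show "subspace T" using T by (rule is_ideal_imp_subspace)
    show "\<forall>a. \<forall>x\<in>T. \<mu> a x \<in> T \<and> \<mu> x a \<in> T" using T unfolding is_ideal_def by blast
    show "\<forall>x\<in>T. \<forall>y\<in>T. \<mu> x y = 0" unfolding T_def by blast
  qed
  have "T \<noteq> {0}"
    using nilpotent_ideal_annihilated_element[OF as nil nontrivial] unfolding T_def by auto
  with square_zero show ?thesis by (rule that)
qed

section \<open>Transport along the orbit\<close>

lemma matrix_inv_mult_left:
  assumes "invertible g"
  shows "matrix_inv g ** g = mat 1"
proof -
  have "\<exists>g'. g ** g' = mat 1 \<and> g' ** g = mat 1" using assms unfolding invertible_def by blast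
  then have "g ** matrix_inv g = mat 1 \<and> matrix_inv g ** g = mat 1"
    unfolding matrix_inv_def by (rule someI_ex)
  then show ?thesis by blast
qed

lemma in_proj_orbitE:
  assumes "in_proj_orbit lam \<mu>"
  obtains g c where "invertible g"
    "lam = (\<lambda>X Y. g *v (c *s \<mu> (matrix_inv g *v X) (matrix_inv g *v Y)))"
  using assms unfolding in_proj_orbit_def gl_act_def by (auto simp: vector_scalar_commute)

lemma bilin_map_in_proj_orbit:
  assumes bl: "bilin_map \<mu>" and orbit: "in_proj_orbit lam \<mu>"
  shows "bilin_map lam"
proof -
  obtain g c where "invertible g" and lam: "lam = (\<lambda>X Y. g *v (c *s \<mu> (matrix_inv g *v X) (matrix_inv g *v Y)))"
    using orbit by (rule in_proj_orbitE)
  have comm: "c *s (d *s v) = d *s (c *s v)" for d and v :: "complex^'a"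
    by (simp add: mult.commute)
  show ?thesis
    unfolding bilin_map_def clinear_vec_def lam
    by (simp add: matrix_vector_right_distrib vector_scalar_commute
        bilin_map_add[OF bl] bilin_map_scale[OF bl] comm)
qed

lemma square_zero_ideal_in_proj_orbit:
  assumes bl: "bilin_map \<mu>" and orbit: "in_proj_orbit lam \<mu>"
    and T: "square_zero_ideal \<mu> T" and nontrivial: "T \<noteq> {0}"
  obtains J where "square_zero_ideal lam J" "J \<noteq> {0}"
proof -
  obtain g c where g: "invertible g"
    and lam: "lam = (\<lambda>X Y. g *v (c *s \<mu> (matrix_inv g *v X) (matrix_inv g *v Y)))"
    using orbit by (rule in_proj_orbitE)
  have inv: "matrix_inv g *v (g *v t) = t" for t
    by (simp add: matrix_vector_mul_assoc matrix_inv_mult_left[OF g])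
  have subspace_T: "subspace T" and absorb: "\<And>a x. x \<in> T \<Longrightarrow> \<mu> a x \<in> T \<and> \<mu> x a \<in> T"
    and square_zero: "\<And>x y. x \<in> T \<Longrightarrow> y \<in> T \<Longrightarrow> \<mu> x y = 0"
    using T unfolding square_zero_ideal_def by blast+
  define J where "J = (\<lambda>t. g *v t) ` T"
  have "subspace J" unfolding J_def using subspace_T by (simp add: linear_subspace_image)
  moreover have "lam a x \<in> J \<and> lam x a \<in> J" if "x \<in> J" for a x
  proof -
    obtain t where t: "t \<in> T" "x = g *v t" using \<open>x \<in> J\<close> unfolding J_def by blast
    \<comment> \<open>\<open>T\<close> is only a real subspace; the complex scalar \<open>c\<close> is moved into the other factor.\<close>
    have "lam a x = g *v \<mu> (c *s (matrix_inv g *v a)) t" "lam x a = g *v \<mu> t (c *s (matrix_inv g *v a))"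
      unfolding lam t(2) inv bilin_map_scale[OF bl] by simp_all
    then show ?thesis unfolding J_def using absorb[OF t(1)] by blast
  qed
  moreover have "lam x y = 0" if xy: "x \<in> J" "y \<in> J" for x y
  proof -
    obtain s t where "s \<in> T" "t \<in> T" "x = g *v s" "y = g *v t" using xy unfolding J_def by blast
    then show ?thesis by (simp add: lam inv square_zero)
  qed
  ultimately have "square_zero_ideal lam J" unfolding square_zero_ideal_def by blast
  moreover have "J \<noteq> {0}"
  proof -
    obtain t where "t \<in> T" "t \<noteq> 0" using nontrivial subspace_0[OF subspace_T] by blast
    then have "g *v t \<in> J" "g *v t \<noteq> 0" unfolding J_def using inv[of t] by auto
    then show ?thesis by blast
  qed
  ultimately show ?thesis by (rule that)
qed

theorem mainTheorem12:
  fixes \<mu> :: "'n::finite bilin"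
  assumes "bilin_map \<mu>"
    and "assoc_alg \<mu>"
    and "\<exists>lam. in_proj_orbit lam \<mu> \<and> neg_definite (Mmat lam)"
  shows "semisimple \<mu>"
  unfolding semisimple_def
proof (intro allI impI)
  fix I assume nil: "nilpotent_ideal \<mu> I"
  obtain lam where orbit: "in_proj_orbit lam \<mu>" and nd: "neg_definite (Mmat lam)"
    using assms(3) by blast
  have bl_lam: "bilin_map lam" using bilin_map_in_proj_orbit[OF assms(1) orbit] .
  show "I = {0}"
  proof (rule ccontr)
    assume "I \<noteq> {0}"
    then obtain T where "square_zero_ideal \<mu> T" "T \<noteq> {0}"
      using nilpotent_ideal_contains_square_zero_ideal[OF assms(1,2) nil] by blast
    then obtain J where "square_zero_ideal lam J" "J \<noteq> {0}"
      using square_zero_ideal_in_proj_orbit[OF assms(1) orbit] by blast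
    with neg_definite_Mmat_square_zero_ideal[OF bl_lam nd] show False by blast
  qed
qed

end
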